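(* Let $s>0$ and let $P:[0,\infty)\to\mathbb{R}$ be a $\mathcal{C}^2$ function with $P(x)>0$ for all $x>0$. Consider, for $x_0>0$ and $\gamma_0>0$, the initial value problem \[ \frac{d\gamma_1}{dx}=\frac{\gamma_1(x)+\gamma_1(x)^2-P(x)}{s\,x\,\gamma_1(x)},\qquad \gamma_1(x_0)=\gamma_0 . \] Then there exist positive global solutions of this initial value problem (i.e. there exist $x_0>0$ and $\gamma_0>0$ such that the solution exists and remains strictly positive for all $x\ge x_0$) if and only if \[ \int_{x_0}^{\infty}\frac{P(z)}{z^{1+2/s}}\,dz<\infty \] for some $x_0>0$.
   Context: Solutions are understood in the region $x>0$, $\gamma_1>0$, where the right-hand side is regular; for given initial data the solution is the unique maximal solution taking values in $(0,\infty)$. A solution is called global (for $x\to\infty$) if it can be continued, remaining strictly positive, to all $x\ge x_0$. *)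

theory Defs
  imports "HOL-Analysis.Analysis"
begin

definition C2_on_nonneg :: "(real \<Rightarrow> real) \<Rightarrow> bool" where
  "C2_on_nonneg P \<longleftrightarrow> (\<exists>P1 P2.
     (\<forall>x\<ge>0. (P has_real_derivative P1 x) (at x within {0..})) \<and>
     (\<forall>x\<ge>0. (P1 has_real_derivative P2 x) (at x within {0..})) \<and>
     continuous_on {0..} P2)"

definition ode_rhs :: "real \<Rightarrow> (real \<Rightarrow> real) \<Rightarrow> real \<Rightarrow> real \<Rightarrow> real" where
  "ode_rhs s P x g = (g + g^2 - P x) / (s * x * g)"

definition global_pos_solution ::
  "real \<Rightarrow> (real \<Rightarrow> real) \<Rightarrow> real \<Rightarrow> (real \<Rightarrow> real) \<Rightarrow> bool" where
  "global_pos_solution s P x0 g \<longleftrightarrow>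
     (\<forall>x\<ge>x0. g x > 0 \<and>
        (g has_real_derivative ode_rhs s P x (g x)) (at x within {x0..}))"

end

theory Submission
  imports Defs
begin

text \<open>With \<open>p x = x powr (-1/s)\<close>, along a positive solution \<open>((\<gamma> + 1) p)' = - p P / (s x \<gamma>) \<le> 0\<close>,
  so \<open>\<gamma> p \<le> B\<close>; then \<open>\<integral>\<^sub>x\<^sub>0\<^sup>x P z / z powr (1 + 2/s) dz + (s/2) (\<gamma> p)\<^sup>2 + B s p\<close> is nonincreasing,
  which bounds the integral. Conversely, \<open>(\<gamma> p)\<^sup>2 + (2/s) \<integral>\<^sub>x\<^sub>0\<^sup>x P z / z powr (1 + 2/s) dz\<close> is
  nondecreasing wherever \<open>\<gamma> \<ge> 1\<close>, so for a large initial value \<open>(\<gamma> p)\<^sup>2\<close> stays above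
  \<open>p x\<^sub>0\<^sup>2 \<ge> p\<^sup>2\<close> and \<open>\<gamma>\<close> never drops below 1. Since the equation is singular at \<open>\<gamma> = 0\<close>,
  the solution is constructed for a globally Lipschitz truncation that agrees with it on \<open>\<gamma> \<ge> 1\<close>,
  by Banach's fixed point theorem in a Bielecki-weighted sup norm.\<close>

section \<open>Calculus on a closed half-line\<close>

lemma at_within_Icc_eq_Ici: "(t::real) \<ge> a \<Longrightarrow> at t within {a..t+1} = at t within {a..}"
  by (rule at_within_nhd[where S="{t - 1 <..< t + 1}"]) auto

lemma continuous_on_Ici_imp_integrable_on_Icc:
  fixes h :: "real \<Rightarrow> real"
  assumes "continuous_on {a..} h"
  shows "h integrable_on {a..b}"
  by (rule integrable_continuous_interval, rule continuous_on_subset[OF assms]) auto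

lemma integral_has_real_derivative_Ici:
  fixes h :: "real \<Rightarrow> real"
  assumes "continuous_on {a..} h" "t \<ge> a"
  shows "((\<lambda>x. integral {a..x} h) has_real_derivative h t) (at t within {a..})"
proof -
  have "continuous_on {a..t+1} h" using assms(1) by (rule continuous_on_subset) auto
  then have "((\<lambda>x. integral {a..x} h) has_real_derivative h t) (at t within {a..t+1})"
    by (rule integral_has_real_derivative) (use assms(2) in simp)
  then show ?thesis by (simp only: at_within_Icc_eq_Ici[OF assms(2)])
qed

lemma DERIV_nonneg_imp_increasing_Ici:
  fixes f f' :: "real \<Rightarrow> real"
  assumes deriv: "\<And>t. t \<ge> a \<Longrightarrow> (f has_real_derivative f' t) (at t within {a..})"
    and nonneg: "\<And>t. t \<ge> a \<Longrightarrow> f' t \<ge> 0" and "a \<le> b"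
  shows "f a \<le> f b"
proof (rule DERIV_nonneg_imp_increasing_open[OF \<open>a \<le> b\<close>])
  fix x assume "a < x" "x < b"
  then have "at x within {a..} = at x"
    by (intro at_within_interior) simp
  with deriv[of x] \<open>a < x\<close> have "DERIV f x :> f' x" by simp
  with nonneg[of x] \<open>a < x\<close> show "\<exists>y. DERIV f x :> y \<and> 0 \<le> y" by auto
next
  have "continuous_on {a..} f" by (rule DERIV_continuous_on) (use deriv in auto)
  then show "continuous_on {a..b} f" by (rule continuous_on_subset) auto
qed

lemma nonneg_integrable_on_Ici_if_integrals_bounded:
  fixes h :: "real \<Rightarrow> real"
  assumes cont: "continuous_on {a..} h" and nonneg: "\<And>x. x \<ge> a \<Longrightarrow> h x \<ge> 0"
    and bounded: "\<And>y. y \<ge> a \<Longrightarrow> integral {a..y} h \<le> C"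
  shows "h integrable_on {a..}"
proof -
  define f where "f n x = (if x \<in> {a..real n} then h x else 0)" for n x
  have f_integral: "(f n has_integral integral {a..real n} h) {a..}" for n
    unfolding f_def
    by (metis (no_types, lifting) ext Icc_subset_Ici_iff order.refl has_integral_restrict
        continuous_on_Ici_imp_integrable_on_Icc[OF cont] integrable_integral)
  have "h integrable_on {a..} \<and> (\<lambda>n. integral {a..} (f n)) \<longlonglongrightarrow> integral {a..} h"
  proof (rule monotone_convergence_increasing)
    show "f n integrable_on {a..}" for n
      using f_integral by blast
    show "f n x \<le> f (Suc n) x" if "x \<in> {a..}" for n x
      using nonneg that by (auto simp: f_def)
    show "(\<lambda>n. f n x) \<longlonglongrightarrow> h x" if "x \<in> {a..}" for x
    proof -
      have "eventually (\<lambda>n. real n \<ge> x) sequentially"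
        by (meson eventually_sequentiallyI nat_ceiling_le_eq)
      with that have "eventually (\<lambda>n. f n x = h x) sequentially"
        by (simp add: eventually_mono f_def)
      then show ?thesis by (simp add: tendsto_eventually)
    qed
    have "norm (integral {a..} (f n)) \<le> max C 0" for n
    proof (cases "a \<le> real n")
      case True
      have "integral {a..real n} h \<ge> 0"
        by (rule integral_nonneg)
          (use continuous_on_Ici_imp_integrable_on_Icc[OF cont] nonneg in auto)
      with bounded[OF True] show ?thesis using f_integral[of n] by (simp add: integral_unique)
    next
      case False
      then show ?thesis using f_integral[of n] by (simp add: integral_unique)
    qed
    then show "bounded (range (\<lambda>n. integral {a..} (f n)))"
      by (metis (no_types, lifting) boundedI rangeE)
  qed
  then show ?thesis by blast
qed

lemma has_real_derivative_powr_within: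
  "x > 0 \<Longrightarrow> ((\<lambda>z. z powr r) has_real_derivative r * (x powr r / x)) (at x within S)"
  using has_real_derivative_powr[of x r]
  by (simp add: has_field_derivative_at_within powr_diff)

lemma C2_on_nonneg_imp_continuous_on: "C2_on_nonneg P \<Longrightarrow> continuous_on {0..} P"
  unfolding C2_on_nonneg_def by (metis DERIV_continuous_on atLeast_iff)


section \<open>Global existence for linearly bounded Lipschitz equations\<close>

locale lipschitz_ode =
  fixes F :: "real \<Rightarrow> real \<Rightarrow> real" and L :: "real \<Rightarrow> real" and x0 :: real
  assumes continuous_on_F: "continuous_on ({x0..} \<times> UNIV) (\<lambda>(t, u). F t u)"
    and continuous_on_L: "continuous_on {x0..} L"
    and L_nonneg: "\<And>t. t \<ge> x0 \<Longrightarrow> L t \<ge> 0"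
    and lipschitz: "\<And>t u v. t \<ge> x0 \<Longrightarrow> \<bar>F t u - F t v\<bar> \<le> L t * \<bar>u - v\<bar>"
    and linear_growth: "\<And>t u. t \<ge> x0 \<Longrightarrow> \<bar>F t u\<bar> \<le> L t * (1 + \<bar>u\<bar>)"
begin

text \<open>Bielecki's weight: measuring solutions by \<open>sup \<bar>y t\<bar> / weight t\<close>, the Picard operator
  becomes a contraction of constant \<open>1/2\<close> on the whole half-line.\<close>
definition weight :: "real \<Rightarrow> real" where
  "weight t = exp (2 * integral {x0..t} L)"

lemma weight_pos: "weight t > 0"
  by (simp add: weight_def)

lemma integral_L_nonneg: "t \<ge> x0 \<Longrightarrow> integral {x0..t} L \<ge> 0"
  by (rule integral_nonneg)
    (use continuous_on_Ici_imp_integrable_on_Icc[OF continuous_on_L] L_nonneg in auto)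

lemma weight_ge_1: "t \<ge> x0 \<Longrightarrow> weight t \<ge> 1"
  using integral_L_nonneg by (simp add: weight_def)

lemma integral_L_le_weight: "t \<ge> x0 \<Longrightarrow> integral {x0..t} L \<le> weight t"
  using exp_ge_add_one_self[of "2 * integral {x0..t} L"] integral_L_nonneg[of t]
  unfolding weight_def by linarith

lemma half_weight_has_real_derivative:
  "t \<ge> x0 \<Longrightarrow> ((\<lambda>t. weight t / 2) has_real_derivative L t * weight t) (at t within {x0..})"
  unfolding weight_def
  by (auto intro!: derivative_eq_intros integral_has_real_derivative_Ici[OF continuous_on_L])

lemma continuous_on_weight: "continuous_on {x0..} weight"
proof -
  have "continuous_on {x0..} (\<lambda>t. integral {x0..t} L)"
    by (rule DERIV_continuous_on)
      (use integral_has_real_derivative_Ici[OF continuous_on_L] in auto)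
  then show ?thesis
    unfolding weight_def by (intro continuous_intros)
qed

lemma continuous_on_L_weight: "continuous_on {x0..} (\<lambda>t. L t * weight t)"
  by (intro continuous_intros continuous_on_L continuous_on_weight)

lemma integral_L_weight:
  assumes t: "t \<ge> x0"
  shows "integral {x0..t} (\<lambda>\<tau>. L \<tau> * weight \<tau>) = (weight t - 1) / 2"
proof -
  have "((\<lambda>\<tau>. L \<tau> * weight \<tau>) has_integral (weight t / 2 - weight x0 / 2)) {x0..t}"
  proof (rule fundamental_theorem_of_calculus[OF t])
    fix x assume x: "x \<in> {x0..t}"
    have "((\<lambda>t. weight t / 2) has_real_derivative L x * weight x) (at x within {x0..t})"
      by (rule has_field_derivative_subset[OF half_weight_has_real_derivative]) (use x in auto)
    then show "((\<lambda>t. weight t / 2) has_vector_derivative L x * weight x) (at x within {x0..t})"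
      by (simp add: has_real_derivative_iff_has_vector_derivative)
  qed
  then show ?thesis by (simp add: integral_unique weight_def field_simps)
qed

lemma continuous_on_F_comp:
  assumes "continuous_on {x0..} y"
  shows "continuous_on {x0..} (\<lambda>t. F t (y t))"
proof -
  have "continuous_on {x0..} (\<lambda>t. (\<lambda>(t, u). F t u) (t, y t))"
    by (rule continuous_on_compose2[OF continuous_on_F]) (auto intro!: continuous_intros assms)
  then show ?thesis by simp
qed

text \<open>The Picard operator, acting on \<open>k = y / weight\<close>.\<close>
definition picard :: "real \<Rightarrow> (real \<Rightarrow>\<^sub>C real) \<Rightarrow> real \<Rightarrow> real" where
  "picard y0 k t = (y0 + integral {x0..t} (\<lambda>\<tau>. F \<tau> (weight \<tau> * k \<tau>))) / weight t"

lemma continuous_on_picard_integrand: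
  fixes k :: "real \<Rightarrow>\<^sub>C real"
  shows "continuous_on {x0..} (\<lambda>\<tau>. F \<tau> (weight \<tau> * k \<tau>))"
  by (auto intro!: continuous_on_F_comp continuous_intros continuous_on_weight)

lemma continuous_on_picard: "continuous_on {x0..} (picard y0 k)"
proof -
  have "continuous_on {x0..} (\<lambda>t. integral {x0..t} (\<lambda>\<tau>. F \<tau> (weight \<tau> * k \<tau>)))"
    by (rule DERIV_continuous_on)
      (use integral_has_real_derivative_Ici[OF continuous_on_picard_integrand] in auto)
  moreover have "weight t \<noteq> 0" for t
    using weight_pos[of t] by simp
  ultimately show ?thesis
    unfolding picard_def by (auto intro!: continuous_intros continuous_on_weight)
qed

lemma abs_picard_le:
  assumes t: "t \<ge> x0"
  shows "\<bar>picard y0 k t\<bar> \<le> \<bar>y0\<bar> + 1 + norm k / 2"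
proof -
  have "norm (integral {x0..t} (\<lambda>\<tau>. F \<tau> (weight \<tau> * k \<tau>)))
      \<le> integral {x0..t} (\<lambda>\<tau>. L \<tau> + norm k * (L \<tau> * weight \<tau>))"
  proof (rule integral_norm_bound_integral)
    show "(\<lambda>\<tau>. F \<tau> (weight \<tau> * k \<tau>)) integrable_on {x0..t}"
      by (rule continuous_on_Ici_imp_integrable_on_Icc[OF continuous_on_picard_integrand])
    show "(\<lambda>\<tau>. L \<tau> + norm k * (L \<tau> * weight \<tau>)) integrable_on {x0..t}"
      by (rule continuous_on_Ici_imp_integrable_on_Icc)
        (intro continuous_intros continuous_on_L continuous_on_L_weight)
    fix \<tau> assume \<tau>: "\<tau> \<in> {x0..t}"
    have "\<bar>weight \<tau> * k \<tau>\<bar> \<le> weight \<tau> * norm k"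
      using norm_bounded[of k \<tau>] weight_pos[of \<tau>] by (simp add: abs_mult mult_left_mono)
    then have "L \<tau> * (1 + \<bar>weight \<tau> * k \<tau>\<bar>) \<le> L \<tau> * (1 + weight \<tau> * norm k)"
      using L_nonneg[of \<tau>] \<tau> by (intro mult_left_mono) auto
    with linear_growth[of \<tau> "weight \<tau> * k \<tau>"] \<tau>
    have "\<bar>F \<tau> (weight \<tau> * k \<tau>)\<bar> \<le> L \<tau> * (1 + weight \<tau> * norm k)"
      by auto
    then show "norm (F \<tau> (weight \<tau> * k \<tau>)) \<le> L \<tau> + norm k * (L \<tau> * weight \<tau>)"
      by (simp add: algebra_simps)
  qed
  also have "\<dots> = integral {x0..t} L + norm k * ((weight t - 1) / 2)"
    using integral_add[OF continuous_on_Ici_imp_integrable_on_Icc[OF continuous_on_L]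
        integrable_on_cmult_left[OF continuous_on_Ici_imp_integrable_on_Icc[OF continuous_on_L_weight]]]
      integral_L_weight[OF t]
    by simp
  also have "\<dots> \<le> (1 + norm k / 2) * weight t"
    using integral_L_le_weight[OF t] norm_ge_zero[of k] by (simp add: field_simps, linarith)
  finally have "\<bar>y0 + integral {x0..t} (\<lambda>\<tau>. F \<tau> (weight \<tau> * k \<tau>))\<bar> \<le> (\<bar>y0\<bar> + 1 + norm k / 2) * weight t"
    using mult_left_mono[OF weight_ge_1[OF t], of "\<bar>y0\<bar>"] by (simp add: algebra_simps)
  then show ?thesis
    unfolding picard_def using weight_pos[of t] by (simp add: abs_div pos_divide_le_eq)
qed

lemma abs_picard_diff_le:
  assumes t: "t \<ge> x0"
  shows "\<bar>picard y0 k1 t - picard y0 k2 t\<bar> \<le> dist k1 k2 / 2"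
proof -
  let ?G = "\<lambda>k \<tau>. F \<tau> (weight \<tau> * k \<tau>)"
  have "\<bar>integral {x0..t} (?G k1) - integral {x0..t} (?G k2)\<bar>
      = norm (integral {x0..t} (\<lambda>\<tau>. ?G k1 \<tau> - ?G k2 \<tau>))"
    using continuous_on_Ici_imp_integrable_on_Icc[OF continuous_on_picard_integrand]
    by (simp add: integral_diff)
  also have "\<dots> \<le> integral {x0..t} (\<lambda>\<tau>. dist k1 k2 * (L \<tau> * weight \<tau>))"
  proof (rule integral_norm_bound_integral)
    show "(\<lambda>\<tau>. ?G k1 \<tau> - ?G k2 \<tau>) integrable_on {x0..t}"
      by (rule continuous_on_Ici_imp_integrable_on_Icc)
        (intro continuous_intros continuous_on_picard_integrand)
    show "(\<lambda>\<tau>. dist k1 k2 * (L \<tau> * weight \<tau>)) integrable_on {x0..t}"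
      by (rule continuous_on_Ici_imp_integrable_on_Icc)
        (intro continuous_intros continuous_on_L_weight)
    fix \<tau> assume \<tau>: "\<tau> \<in> {x0..t}"
    have "\<bar>weight \<tau> * k1 \<tau> - weight \<tau> * k2 \<tau>\<bar> \<le> weight \<tau> * dist k1 k2"
      using dist_bounded[of k1 \<tau> k2] weight_pos[of \<tau>]
      by (simp add: dist_real_def abs_mult flip: right_diff_distrib)
    then have "L \<tau> * \<bar>weight \<tau> * k1 \<tau> - weight \<tau> * k2 \<tau>\<bar> \<le> L \<tau> * (weight \<tau> * dist k1 k2)"
      using L_nonneg[of \<tau>] \<tau> by (intro mult_left_mono) auto
    with lipschitz[of \<tau> "weight \<tau> * k1 \<tau>" "weight \<tau> * k2 \<tau>"] \<tau>
    have "\<bar>?G k1 \<tau> - ?G k2 \<tau>\<bar> \<le> L \<tau> * (weight \<tau> * dist k1 k2)"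
      by auto
    then show "norm (?G k1 \<tau> - ?G k2 \<tau>) \<le> dist k1 k2 * (L \<tau> * weight \<tau>)"
      by (simp add: algebra_simps)
  qed
  also have "\<dots> = dist k1 k2 * ((weight t - 1) / 2)"
    using integral_L_weight[OF t] by simp
  also have "\<dots> \<le> dist k1 k2 / 2 * weight t"
    by (simp add: algebra_simps)
  finally show ?thesis
    unfolding picard_def using weight_pos[of t]
    by (simp add: abs_div pos_divide_le_eq flip: diff_divide_distrib)
qed

theorem global_solution_exists:
  "\<exists>y. y x0 = y0 \<and> (\<forall>t\<ge>x0. (y has_real_derivative F t (y t)) (at t within {x0..}))"
proof -
  \<comment> \<open>Functions on \<open>{x0..}\<close> are extended constantly to the left, to live in \<open>real \<Rightarrow>\<^sub>C real\<close>.\<close>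
  define T where "T k = Bcontfun (\<lambda>t. picard y0 k (max t x0))" for k
  have "(\<lambda>t. picard y0 k (max t x0)) \<in> bcontfun" for k
  proof (rule bcontfun_normI)
    show "continuous_on UNIV (\<lambda>t. picard y0 k (max t x0))"
      by (rule continuous_on_compose2[OF continuous_on_picard]) (auto intro!: continuous_intros)
    show "norm (picard y0 k (max t x0)) \<le> \<bar>y0\<bar> + 1 + norm k / 2" for t
      using abs_picard_le[of "max t x0"] by simp
  qed
  then have T_apply: "T k t = picard y0 k (max t x0)" for k t
    unfolding T_def by (simp add: Bcontfun_inverse)
  have "dist (T k1) (T k2) \<le> 1/2 * dist k1 k2" for k1 k2
    by (rule dist_bound) (use abs_picard_diff_le in \<open>simp add: T_apply dist_real_def\<close>)
  then obtain k where k: "T k = k"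
    using banach_fix_type[of "1/2" T] by auto
  define y where "y t = weight t * k t" for t
  have y_eq: "y t = y0 + integral {x0..t} (\<lambda>\<tau>. F \<tau> (y \<tau>))" if "t \<ge> x0" for t
    using T_apply[of k t] k that weight_pos[of t]
    by (simp add: y_def picard_def max_def)
  show ?thesis
  proof (intro exI conjI allI impI)
    show "y x0 = y0" using y_eq[of x0] by simp
    fix t assume t: "t \<ge> x0"
    have "continuous_on {x0..} (\<lambda>\<tau>. F \<tau> (y \<tau>))"
      unfolding y_def by (rule continuous_on_picard_integrand)
    from integral_has_real_derivative_Ici[OF this t]
    have "((\<lambda>t. y0 + integral {x0..t} (\<lambda>\<tau>. F \<tau> (y \<tau>))) has_real_derivative F t (y t))
        (at t within {x0..})"
      by (auto intro!: derivative_eq_intros)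
    then show "(y has_real_derivative F t (y t)) (at t within {x0..})"
      by (rule has_field_derivative_transform_within[where d=1]) (use t y_eq in auto)
  qed
qed

end


section \<open>Necessity of the integrability condition\<close>

lemma powr_one_plus_two_div_eq:
  fixes x s :: real
  assumes "x > 0"
  shows "x powr (1 + 2 / s) = x / (x powr (-1/s) * x powr (-1/s))"
proof -
  have "x powr (-1/s) * x powr (-1/s) = 1 / x powr (2/s)"
    by (simp add: powr_add[symmetric] powr_minus_divide[symmetric])
  moreover have "x powr (1 + 2/s) = x * x powr (2/s)"
    using assms by (simp add: powr_add)
  ultimately show ?thesis using assms by simp
qed

lemma global_pos_solutionD:
  assumes "global_pos_solution s P x0 g" "x \<ge> x0"
  shows "g x > 0"
    and "(g has_real_derivative (g x + g x * g x - P x) / (s * x * g x)) (at x within {x0..})"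
  using assms unfolding global_pos_solution_def ode_rhs_def by (auto simp: power2_eq_square)

context
  fixes s x0 :: real and P g :: "real \<Rightarrow> real"
  assumes s: "s > 0" and x0: "x0 > 0" and P_pos: "\<And>x. x > 0 \<Longrightarrow> P x > 0"
    and sol: "global_pos_solution s P x0 g"
begin

lemma global_pos_solution_weighted_bound:
  assumes X: "X \<ge> x0"
  shows "(g X + 1) * X powr (-1/s) \<le> (g x0 + 1) * x0 powr (-1/s)"
proof -
  define p where "p x = x powr (-1/s)" for x
  have p_deriv: "(p has_real_derivative (-1/s) * (p t / t)) (at t within {x0..})" if "t \<ge> x0" for t
    unfolding p_def by (rule has_real_derivative_powr_within) (use that x0 in simp)
  have "- ((g x0 + 1) * p x0) \<le> - ((g X + 1) * p X)"
  proof (rule DERIV_nonneg_imp_increasing_Ici[where f="\<lambda>x. - ((g x + 1) * p x)"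
        and f'="\<lambda>t. p t * P t / (s * t * g t)"])
    fix t assume t: "t \<ge> x0"
    have g_pos: "g t > 0" by (rule global_pos_solutionD(1)[OF sol t])
    let ?g' = "(g t + g t * g t - P t) / (s * t * g t)" and ?p' = "-1/s * (p t / t)"
    have "((\<lambda>x. - ((g x + 1) * p x)) has_real_derivative - ((?g' + 0) * p t + ?p' * (g t + 1)))
        (at t within {x0..})"
      by (intro DERIV_minus DERIV_mult DERIV_add global_pos_solutionD(2)[OF sol t] p_deriv[OF t]
          DERIV_const)
    moreover have "- ((?g' + 0) * p t + ?p' * (g t + 1)) = p t * P t / (s * t * g t)"
      using s x0 t g_pos by (simp add: field_simps; simp add: algebra_simps)
    ultimately show "((\<lambda>x. - ((g x + 1) * p x)) has_real_derivative p t * P t / (s * t * g t))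
        (at t within {x0..})"
      by simp
    show "p t * P t / (s * t * g t) \<ge> 0"
      unfolding p_def using s x0 t g_pos P_pos[of t] by simp
  qed (use X in auto)
  then show ?thesis unfolding p_def by simp
qed

lemma global_pos_solution_integrals_bounded:
  assumes P_cont: "continuous_on {x0..} P"
  shows "\<exists>C. \<forall>X\<ge>x0. integral {x0..X} (\<lambda>z. P z / z powr (1 + 2 / s)) \<le> C"
proof -
  define p where "p x = x powr (-1/s)" for x
  define f where "f z = P z / z powr (1 + 2 / s)" for z
  define B where "B = (g x0 + 1) * p x0"
  have p_pos: "p x > 0" if "x \<ge> x0" for x unfolding p_def using that x0 by simp
  have p_deriv: "(p has_real_derivative (-1/s) * (p t / t)) (at t within {x0..})" if "t \<ge> x0" for t
    unfolding p_def by (rule has_real_derivative_powr_within) (use that x0 in simp)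
  have f_eq: "f x = P x * (p x * p x) / x" if "x \<ge> x0" for x
    unfolding f_def p_def using powr_one_plus_two_div_eq[of x s] that x0 by simp
  have f_cont: "continuous_on {x0..} f"
    unfolding f_def using x0 by (intro continuous_intros P_cont) auto
  have gp_le_B: "g x * p x \<le> B" if "x \<ge> x0" for x
    using global_pos_solution_weighted_bound[OF that, folded p_def] p_pos[OF that]
    unfolding B_def by (simp add: algebra_simps)
  have B_nonneg: "B \<ge> 0"
    unfolding B_def using global_pos_solutionD(1)[OF sol, of x0] p_pos[of x0] by simp
  \<comment> \<open>\<open>\<Phi>\<close> is nonincreasing: its derivative is \<open>p (g p - B) / x \<le> 0\<close>.\<close>
  define \<Phi> where "\<Phi> x = integral {x0..x} f + (s/2) * (g x * g x * (p x * p x)) + B * s * p x" for x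
  have "integral {x0..X} f \<le> \<Phi> x0" if X: "X \<ge> x0" for X
  proof -
    have "- \<Phi> x0 \<le> - \<Phi> X"
    proof (rule DERIV_nonneg_imp_increasing_Ici[where f="\<lambda>x. - \<Phi> x"
          and f'="\<lambda>x. (B * p x - g x * (p x * p x)) / x"])
      fix t assume t: "t \<ge> x0"
      have g_pos: "g t > 0" by (rule global_pos_solutionD(1)[OF sol t])
      let ?g' = "(g t + g t * g t - P t) / (s * t * g t)" and ?p' = "-1/s * (p t / t)"
      have "((\<lambda>x. - \<Phi> x) has_real_derivative
          - (f t + (s/2) * ((?g' * g t + ?g' * g t) * (p t * p t) + (?p' * p t + ?p' * p t) * (g t * g t))
             + B * s * ?p')) (at t within {x0..})"
        unfolding \<Phi>_def
        by (intro DERIV_minus DERIV_add DERIV_mult DERIV_cmult global_pos_solutionD(2)[OF sol t]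
            p_deriv[OF t] integral_has_real_derivative_Ici[OF f_cont t])
      moreover have "- (f t + (s/2) * ((?g' * g t + ?g' * g t) * (p t * p t) + (?p' * p t + ?p' * p t) * (g t * g t))
             + B * s * ?p') = (B * p t - g t * (p t * p t)) / t"
        using s x0 t g_pos unfolding f_eq[OF t] by (simp add: field_simps; simp add: algebra_simps)
      ultimately show "((\<lambda>x. - \<Phi> x) has_real_derivative (B * p t - g t * (p t * p t)) / t)
          (at t within {x0..})"
        by simp
      have "g t * (p t * p t) \<le> B * p t"
        using mult_right_mono[OF gp_le_B[OF t], of "p t"] p_pos[OF t] by (simp add: algebra_simps)
      then show "(B * p t - g t * (p t * p t)) / t \<ge> 0" using t x0 by simp
    qed (use X in auto)
    moreover have "B * s * p X \<ge> 0" using B_nonneg s p_pos[OF X] by simp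
    moreover have "(s/2) * (g X * g X * (p X * p X)) \<ge> 0" using s by simp
    ultimately show ?thesis unfolding \<Phi>_def by linarith
  qed
  then show ?thesis unfolding f_def by blast
qed

lemma global_pos_solution_imp_integrable:
  assumes "continuous_on {x0..} P"
  shows "(\<lambda>z. P z / z powr (1 + 2 / s)) integrable_on {x0..}"
proof -
  have "continuous_on {x0..} (\<lambda>z. P z / z powr (1 + 2 / s))"
    using x0 by (intro continuous_intros assms) auto
  moreover have "P x / x powr (1 + 2 / s) \<ge> 0" if "x \<ge> x0" for x
    using P_pos[of x] that x0 by simp
  moreover obtain C where "\<And>X. X \<ge> x0 \<Longrightarrow> integral {x0..X} (\<lambda>z. P z / z powr (1 + 2 / s)) \<le> C"
    using global_pos_solution_integrals_bounded[OF assms] by blast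
  ultimately show ?thesis by (rule nonneg_integrable_on_Ici_if_integrals_bounded)
qed

end


section \<open>Sufficiency of the integrability condition\<close>

text \<open>A right-hand side that is globally Lipschitz in \<open>u\<close> and agrees with \<open>ode_rhs\<close> for
  \<open>u \<ge> 1\<close>; solutions of the truncated equation started high enough never leave that region.\<close>
definition truncated_rhs :: "real \<Rightarrow> (real \<Rightarrow> real) \<Rightarrow> real \<Rightarrow> real \<Rightarrow> real" where
  "truncated_rhs s P t u = (min (max u 0) 1 + u - P t / max u 1) / (s * t)"

lemma truncated_rhs_eq_ode_rhs: "u \<ge> 1 \<Longrightarrow> truncated_rhs s P t u = ode_rhs s P t u"
  unfolding truncated_rhs_def ode_rhs_def
  by (cases "s * t = 0") (auto simp: field_simps power2_eq_square max_def)

lemma abs_clamp_diff_le: "\<bar>min (max u 0) 1 - min (max v 0) 1\<bar> \<le> \<bar>u - v\<bar>" for u v :: real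
  by (simp add: min_def max_def)

lemma abs_div_max_1_diff_le:
  fixes u v c :: real
  assumes "c \<ge> 0"
  shows "\<bar>c / max u 1 - c / max v 1\<bar> \<le> c * \<bar>u - v\<bar>"
proof -
  have mu: "max u 1 \<ge> 1" and mv: "max v 1 \<ge> 1" by auto
  then have prod: "max u 1 * max v 1 \<ge> 1" using mult_mono[OF mu mv] by simp
  have "c / max u 1 - c / max v 1 = c * (max v 1 - max u 1) / (max u 1 * max v 1)"
    using mu mv by (simp add: field_simps)
  then have "\<bar>c / max u 1 - c / max v 1\<bar> = c * \<bar>max v 1 - max u 1\<bar> / (max u 1 * max v 1)"
    using assms mu mv by (simp add: abs_mult abs_div)
  also have "\<dots> \<le> c * \<bar>max v 1 - max u 1\<bar>"
    using divide_left_mono[OF prod, of "c * \<bar>max v 1 - max u 1\<bar>"] prod assms by simp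
  also have "\<dots> \<le> c * \<bar>u - v\<bar>"
    using assms by (intro mult_left_mono) (auto simp: max_def)
  finally show ?thesis .
qed

lemma clamp_truncation_nonneg:
  fixes u c :: real
  assumes "c \<ge> 0"
  shows "u * min (max u 0) 1 - u * c / max u 1 + c \<ge> 0"
proof (cases "u \<le> 1")
  case True
  then have "u * min (max u 0) 1 - u * c / max u 1 + c = u * max u 0 + (1 - u) * c"
    by (simp add: max_def min_def algebra_simps)
  also have "\<dots> \<ge> 0"
    using True assms by (simp add: max_def)
  finally show ?thesis .
next
  case False
  then show ?thesis using assms by (simp add: max_def min_def)
qed

lemma lipschitz_ode_truncated_rhs:
  assumes s: "s > 0" and x0: "x0 > 0"
    and P_cont: "continuous_on {x0..} P" and P_nonneg: "\<And>t. t \<ge> x0 \<Longrightarrow> P t \<ge> 0"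
  shows "lipschitz_ode (truncated_rhs s P) (\<lambda>t. (2 + P t) / (s * x0)) x0"
proof
  have P_fst: "continuous_on ({x0..} \<times> (UNIV::real set)) (\<lambda>z. P (fst z))"
    by (rule continuous_on_compose2[OF P_cont]) (auto intro!: continuous_intros)
  have "max u 1 \<noteq> 0" for u :: real
    by (metis max.cobounded2 not_one_le_zero)
  then have "continuous_on ({x0..} \<times> UNIV)
      (\<lambda>z. (min (max (snd z) 0) 1 + snd z - P (fst z) / max (snd z) 1) / (s * fst z))"
    using s x0 by (intro continuous_intros P_fst) auto
  then show "continuous_on ({x0..} \<times> UNIV) (\<lambda>(t, u). truncated_rhs s P t u)"
    unfolding truncated_rhs_def split_def .
  show "continuous_on {x0..} (\<lambda>t. (2 + P t) / (s * x0))"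
    using s x0 by (intro continuous_intros P_cont) auto
  show "(2 + P t) / (s * x0) \<ge> 0" if "t \<ge> x0" for t
    using P_nonneg[OF that] s x0 by simp
  have le_x0: "a / (s * t) \<le> a / (s * x0)" if "a \<ge> 0" "t \<ge> x0" for a t
    using that s x0 by (intro divide_left_mono) auto
  show "\<bar>truncated_rhs s P t u - truncated_rhs s P t v\<bar> \<le> (2 + P t) / (s * x0) * \<bar>u - v\<bar>"
    if t: "t \<ge> x0" for t u v
  proof -
    have triangle: "\<bar>a + d - c\<bar> \<le> (2 + p) * \<bar>d\<bar>" if "\<bar>a\<bar> \<le> \<bar>d\<bar>" "\<bar>c\<bar> \<le> p * \<bar>d\<bar>"
      for a d c p :: real
      using that by (simp add: distrib_right)
    have st: "s * t > 0" using s x0 t by simp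
    have "truncated_rhs s P t u - truncated_rhs s P t v
        = ((min (max u 0) 1 - min (max v 0) 1) + (u - v) - (P t / max u 1 - P t / max v 1)) / (s * t)"
      unfolding truncated_rhs_def diff_divide_distrib[symmetric] by (simp add: algebra_simps)
    then have "\<bar>truncated_rhs s P t u - truncated_rhs s P t v\<bar>
        = \<bar>(min (max u 0) 1 - min (max v 0) 1) + (u - v) - (P t / max u 1 - P t / max v 1)\<bar> / (s * t)"
      using st by (simp add: abs_div)
    also have "\<dots> \<le> (2 + P t) * \<bar>u - v\<bar> / (s * t)"
      by (rule divide_right_mono[OF triangle[OF abs_clamp_diff_le abs_div_max_1_diff_le[OF P_nonneg[OF t]]]
            less_imp_le[OF st]])
    also have "\<dots> \<le> (2 + P t) * \<bar>u - v\<bar> / (s * x0)"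
      using P_nonneg[OF t] t by (intro le_x0) auto
    finally show ?thesis by simp
  qed
  show "\<bar>truncated_rhs s P t u\<bar> \<le> (2 + P t) / (s * x0) * (1 + \<bar>u\<bar>)" if t: "t \<ge> x0" for t u
  proof -
    have "\<bar>m + u - q\<bar> \<le> (2 + p) * (1 + \<bar>u\<bar>)" if "0 \<le> m" "m \<le> 1" "0 \<le> q" "q \<le> p"
      for m q p :: real
    proof -
      have "\<bar>m + u - q\<bar> \<le> 1 + \<bar>u\<bar> + p" using that by linarith
      also have "\<dots> \<le> (2 + p) * (1 + \<bar>u\<bar>)" using that by (simp add: algebra_simps)
      finally show ?thesis .
    qed
    moreover have "P t / max u 1 \<le> P t" "0 \<le> P t / max u 1"
      using P_nonneg[OF t] by (auto simp: divide_le_eq max_def mult_le_cancel_left1)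
    ultimately have "\<bar>min (max u 0) 1 + u - P t / max u 1\<bar> \<le> (2 + P t) * (1 + \<bar>u\<bar>)"
      by simp
    then have "\<bar>truncated_rhs s P t u\<bar> \<le> (2 + P t) * (1 + \<bar>u\<bar>) / (s * t)"
      unfolding truncated_rhs_def using s x0 t by (simp add: abs_div divide_right_mono)
    also have "\<dots> \<le> (2 + P t) * (1 + \<bar>u\<bar>) / (s * x0)"
      using P_nonneg[OF t] t by (intro le_x0) auto
    finally show ?thesis by simp
  qed
qed


context
  fixes s x0 :: real and P g :: "real \<Rightarrow> real"
  assumes s: "s > 0" and x0: "x0 > 0" and P_pos: "\<And>x. x > 0 \<Longrightarrow> P x > 0"
    and P_cont: "continuous_on {x0..} P"
    and integrable: "(\<lambda>z. P z / z powr (1 + 2 / s)) integrable_on {x0..}"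
    and g_deriv: "\<And>t. t \<ge> x0 \<Longrightarrow> (g has_real_derivative truncated_rhs s P t (g t)) (at t within {x0..})"
begin

lemma truncated_solution_sq_ge_1:
  assumes init: "(g x0 * x0 powr (-1/s))\<^sup>2
      \<ge> 2 / s * integral {x0..} (\<lambda>z. P z / z powr (1 + 2 / s)) + (x0 powr (-1/s))\<^sup>2"
    and X: "X \<ge> x0"
  shows "g X * g X \<ge> 1"
proof -
  define p where "p x = x powr (-1/s)" for x
  define f where "f z = P z / z powr (1 + 2 / s)" for z
  have p_pos: "p x > 0" if "x \<ge> x0" for x unfolding p_def using that x0 by simp
  have p_deriv: "(p has_real_derivative (-1/s) * (p t / t)) (at t within {x0..})" if "t \<ge> x0" for t
    unfolding p_def by (rule has_real_derivative_powr_within) (use that x0 in simp)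
  have f_eq: "f x = P x * (p x * p x) / x" if "x \<ge> x0" for x
    unfolding f_def p_def using powr_one_plus_two_div_eq[of x s] that x0 by simp
  have f_cont: "continuous_on {x0..} f"
    unfolding f_def using x0 by (intro continuous_intros P_cont) auto
  have f_nonneg: "f x \<ge> 0" if "x \<ge> x0" for x
    unfolding f_def using P_pos[of x] that x0 by simp
  \<comment> \<open>\<open>\<psi>\<close> is nondecreasing: its derivative is a nonnegative multiple of
    \<open>g min (max g 0) 1 - g P / max g 1 + P\<close>, see \<open>clamp_truncation_nonneg\<close>.\<close>
  define \<psi> where "\<psi> x = g x * g x * (p x * p x) + 2 / s * integral {x0..x} f" for x
  have "\<psi> x0 \<le> \<psi> X"
  proof (rule DERIV_nonneg_imp_increasing_Ici[where f=\<psi>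
        and f'="\<lambda>t. 2 / s * (p t * p t / t) * (g t * min (max (g t) 0) 1 - g t * P t / max (g t) 1 + P t)"])
    fix t assume t: "t \<ge> x0"
    let ?g' = "truncated_rhs s P t (g t)" and ?p' = "-1/s * (p t / t)"
    have "(\<psi> has_real_derivative
        (?g' * g t + ?g' * g t) * (p t * p t) + (?p' * p t + ?p' * p t) * (g t * g t) + 2 / s * f t)
        (at t within {x0..})"
      unfolding \<psi>_def
      by (intro DERIV_add DERIV_mult DERIV_cmult g_deriv[OF t] p_deriv[OF t]
          integral_has_real_derivative_Ici[OF f_cont t])
    moreover have "max (g t) 1 \<noteq> 0"
      by (metis max.cobounded2 not_one_le_zero)
    then have "(?g' * g t + ?g' * g t) * (p t * p t) + (?p' * p t + ?p' * p t) * (g t * g t) + 2 / s * f t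
        = 2 / s * (p t * p t / t) * (g t * min (max (g t) 0) 1 - g t * P t / max (g t) 1 + P t)"
      using s x0 t unfolding f_eq[OF t] truncated_rhs_def
      by (simp add: field_simps; simp add: algebra_simps)
    ultimately show "(\<psi> has_real_derivative
        2 / s * (p t * p t / t) * (g t * min (max (g t) 0) 1 - g t * P t / max (g t) 1 + P t))
        (at t within {x0..})"
      by simp
    show "2 / s * (p t * p t / t) * (g t * min (max (g t) 0) 1 - g t * P t / max (g t) 1 + P t) \<ge> 0"
      using clamp_truncation_nonneg[of "P t" "g t"] P_pos[of t] s t x0 by simp
  qed (use X in auto)
  moreover have "integral {x0..X} f \<le> integral {x0..} f"
    using continuous_on_Ici_imp_integrable_on_Icc[OF f_cont] integrable f_nonneg
    unfolding f_def by (intro integral_subset_le) auto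
  then have "2 / s * integral {x0..X} f \<le> 2 / s * integral {x0..} f"
    using s by (intro mult_left_mono) auto
  moreover have "g x0 * g x0 * (p x0 * p x0) \<ge> 2 / s * integral {x0..} f + p x0 * p x0"
    using init unfolding p_def f_def by (simp add: power2_eq_square algebra_simps)
  ultimately have "g X * g X * (p X * p X) \<ge> p x0 * p x0"
    unfolding \<psi>_def by simp
  also have "p x0 * p x0 \<ge> p X * p X"
    using p_pos[OF X] X s x0 unfolding p_def by (intro mult_mono powr_mono2') auto
  finally show ?thesis
    using p_pos[OF X] by (simp add: mult_le_cancel_right2)
qed

lemma truncated_solution_ge_1:
  assumes init: "(g x0 * x0 powr (-1/s))\<^sup>2
      \<ge> 2 / s * integral {x0..} (\<lambda>z. P z / z powr (1 + 2 / s)) + (x0 powr (-1/s))\<^sup>2"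
    and g0_pos: "g x0 > 0" and X: "X \<ge> x0"
  shows "g X \<ge> 1"
proof -
  have "g X > 0"
  proof (rule ccontr)
    assume "\<not> g X > 0"
    then have "g X \<le> 0" by simp
    moreover have "continuous_on {x0..X} g"
      by (rule continuous_on_subset[OF DERIV_continuous_on[of "{x0..}"]]) (use g_deriv in auto)
    ultimately obtain x where "x0 \<le> x" "x \<le> X" "g x = 0"
      using IVT2'[of g X 0 x0] g0_pos X by auto
    with truncated_solution_sq_ge_1[OF init, of x] show False by simp
  qed
  with truncated_solution_sq_ge_1[OF init X] show ?thesis
    by (smt (verit) mult_less_cancel_left2)
qed

end

lemma integrable_imp_global_pos_solution:
  fixes s x0 :: real and P :: "real \<Rightarrow> real"
  assumes s: "s > 0" and x0: "x0 > 0" and P_pos: "\<And>x. x > 0 \<Longrightarrow> P x > 0"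
    and P_cont: "continuous_on {x0..} P"
    and integrable: "(\<lambda>z. P z / z powr (1 + 2 / s)) integrable_on {x0..}"
  shows "\<exists>\<gamma>0 > 0. \<exists>g. g x0 = \<gamma>0 \<and> global_pos_solution s P x0 g"
proof -
  define I where "I = integral {x0..} (\<lambda>z. P z / z powr (1 + 2 / s))"
  define p0 where "p0 = x0 powr (-1/s)"
  have "I \<ge> 0"
    unfolding I_def using P_pos x0 by (intro integral_nonneg[OF integrable]) (auto intro: less_imp_le)
  moreover have "p0 > 0" unfolding p0_def using x0 by simp
  ultimately have radicand: "2 / s * I / p0\<^sup>2 + 1 > 0" using s by (intro add_nonneg_pos) auto
  define \<gamma>0 where "\<gamma>0 = sqrt (2 / s * I / p0\<^sup>2 + 1)"
  have \<gamma>0_pos: "\<gamma>0 > 0" unfolding \<gamma>0_def using radicand by simp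
  have init: "(\<gamma>0 * p0)\<^sup>2 = 2 / s * I + p0\<^sup>2"
    unfolding \<gamma>0_def power_mult_distrib using radicand \<open>p0 > 0\<close> by (simp add: field_simps)
  have P_nonneg: "t \<ge> x0 \<Longrightarrow> P t \<ge> 0" for t using P_pos[of t] x0 by simp
  interpret lipschitz_ode "truncated_rhs s P" "\<lambda>t. (2 + P t) / (s * x0)" x0
    by (rule lipschitz_ode_truncated_rhs[OF s x0 P_cont P_nonneg])
  obtain g where g0: "g x0 = \<gamma>0"
    and g_deriv: "\<And>t. t \<ge> x0 \<Longrightarrow> (g has_real_derivative truncated_rhs s P t (g t)) (at t within {x0..})"
    using global_solution_exists[of \<gamma>0] by blast
  have g_ge_1: "g t \<ge> 1" if "t \<ge> x0" for t
  proof (rule truncated_solution_ge_1[of s x0 P g])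
    show "2 / s * integral {x0..} (\<lambda>z. P z / z powr (1 + 2 / s)) + (x0 powr (-1/s))\<^sup>2
        \<le> (g x0 * x0 powr (-1/s))\<^sup>2"
      using init unfolding g0 I_def p0_def by simp
  qed (use s x0 P_pos P_cont integrable g_deriv g0 \<gamma>0_pos that in auto)
  have "global_pos_solution s P x0 g"
    unfolding global_pos_solution_def
    using g_ge_1 g_deriv by (auto simp: truncated_rhs_eq_ode_rhs intro: less_le_trans[OF zero_less_one])
  with g0 \<gamma>0_pos show ?thesis by blast
qed

theorem theorem1:
  fixes s :: real and P :: "real \<Rightarrow> real"
  assumes "s > 0"
    and "C2_on_nonneg P"
    and "\<And>x. x > 0 \<Longrightarrow> P x > 0"
  shows "(\<exists>x0 > 0. \<exists>\<gamma>0 > 0. \<exists>g. g x0 = \<gamma>0 \<and> global_pos_solution s P x0 g)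
     \<longleftrightarrow> (\<exists>x0 > 0. (\<lambda>z. P z / z powr (1 + 2 / s)) integrable_on {x0..})"
proof -
  have P_cont: "continuous_on {x0..} P" if "x0 > 0" for x0
    by (rule continuous_on_subset[OF C2_on_nonneg_imp_continuous_on[OF assms(2)]]) (use that in auto)
  show ?thesis
    using global_pos_solution_imp_integrable[OF assms(1) _ assms(3) _ P_cont]
      integrable_imp_global_pos_solution[OF assms(1) _ assms(3) P_cont]
    by meson
qed

end
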